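(* For every quasi-poset $T=(A,\le_T)$, $\varepsilon'\circ\phi_{ehr_{-1}}(T)=1$ and \[\phi_{ehr_{-1}}(T)=\sum_{f\in L'(T)}\big(f^{-1}(1),\ldots,f^{-1}(\max(f))\big).\]
   Context: $\mathcal{T}op[A]$ is spanned by quasi-orders $T=(A,\le_T)$ on the finite set $A$; $x\sim_T y$ iff $x\le_T y$ and $y\le_T x$; $cl(T)$ is the number of $\sim_T$-classes. $\mathcal{C}omp[A]$ has basis the set compositions $(A_1,\ldots,A_k)$ of $A$ (nonempty pairwise disjoint blocks, union $A$); $\varepsilon'(A_1,\ldots,A_k)=\delta_{k,1}$ for $k\ge1$ and $\varepsilon'(\emptyset)=1$. Let $\phi(T)=\sum_{f\in L(T)}(f^{-1}(1),\ldots,f^{-1}(\max f))$, where $L(T)$ is the set of surjections $f:A\to\{1,\ldots,\max f\}$ with $a\le_T b\Rightarrow f(a)\le f(b)$ and ($a\le_T b$, $f(a)=f(b)$) $\Rightarrow a\sim_T b$; $L'(T)$ is the set of surjections $f$ with only the first condition. Let $\iota_{-1}(T)=(-1)^{cl(T)}T$ and $\theta_{-1}(A_1,\ldots,A_n)=(-1)^n\sum_{p\ge0}\sum_{1\le i_1<\cdots<i_p<n}(A_1\sqcup\cdots\sqcup A_{i_1},\ldots,A_{i_p+1}\sqcup\cdots\sqcup A_n)$ (with $\theta_{-1}(\emptyset)=\emptyset$). Define $\phi_{ehr_{-1}}=\theta_{-1}\circ\phi\circ\iota_{-1}$ (note $\theta_{-1}\circ\theta_{-1}=Id$). *)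

theory Defs
  imports Main
begin

definition quasi_order :: "'a set \<Rightarrow> ('a \<times> 'a) set \<Rightarrow> bool" where
  "quasi_order A R \<longleftrightarrow> R \<subseteq> A \<times> A \<and> (\<forall>x\<in>A. (x, x) \<in> R) \<and> trans R"

definition cl :: "'a set \<Rightarrow> ('a \<times> 'a) set \<Rightarrow> nat" where
  "cl A R = card (A // (R \<inter> R\<inverse>))"

(* Set compositions (A_1,...,A_k) are encoded as lists of sets; elements of the
   span Comp[A] are encoded as coefficient functions 'a set list => int. *)
type_synonym 'a lincomb = "'a set list \<Rightarrow> int"

definition surj_maps :: "'a set \<Rightarrow> ('a \<Rightarrow> nat) set" where
  "surj_maps A = {f. (\<forall>x. x \<notin> A \<longrightarrow> f x = 0) \<and> (\<exists>n. f ` A = {1..n})}"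

definition max_f :: "'a set \<Rightarrow> ('a \<Rightarrow> nat) \<Rightarrow> nat" where
  "max_f A f = card (f ` A)"

definition comp_of :: "'a set \<Rightarrow> ('a \<Rightarrow> nat) \<Rightarrow> 'a set list" where
  "comp_of A f = map (\<lambda>i. {x\<in>A. f x = i}) [1..<max_f A f + 1]"

definition L :: "'a set \<Rightarrow> ('a \<times> 'a) set \<Rightarrow> ('a \<Rightarrow> nat) set" where
  "L A R = {f \<in> surj_maps A. (\<forall>a b. (a, b) \<in> R \<longrightarrow> f a \<le> f b)
                             \<and> (\<forall>a b. (a, b) \<in> R \<and> f a = f b \<longrightarrow> (b, a) \<in> R)}"

definition L' :: "'a set \<Rightarrow> ('a \<times> 'a) set \<Rightarrow> ('a \<Rightarrow> nat) set" where
  "L' A R = {f \<in> surj_maps A. (\<forall>a b. (a, b) \<in> R \<longrightarrow> f a \<le> f b)}"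

definition sum_comps :: "'a set \<Rightarrow> ('a \<Rightarrow> nat) set \<Rightarrow> 'a lincomb" where
  "sum_comps A F C = int (card {f \<in> F. comp_of A f = C})"

definition phi :: "'a set \<Rightarrow> ('a \<times> 'a) set \<Rightarrow> 'a lincomb" where
  "phi A R = sum_comps A (L A R)"

(* phi applied to iota_{-1}(T) = (-1)^{cl T} T, using linearity of phi *)
definition phi_iota :: "'a set \<Rightarrow> ('a \<times> 'a) set \<Rightarrow> 'a lincomb" where
  "phi_iota A R C = (-1) ^ cl A R * phi A R C"

definition lin_ext :: "('a set list \<Rightarrow> 'b \<Rightarrow> int) \<Rightarrow> 'a lincomb \<Rightarrow> 'b \<Rightarrow> int" where
  "lin_ext g x D = (\<Sum>C\<in>{C. x C \<noteq> 0}. x C * g C D)"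

(* merging consecutive blocks of C, cutting after the positions in S \<subseteq> {1..<n} *)
definition coarsen :: "'a set list \<Rightarrow> nat set \<Rightarrow> 'a set list" where
  "coarsen C S = (if C = [] then [] else
     (let cuts = [0] @ sorted_list_of_set S @ [length C]
      in map (\<lambda>k. \<Union> (set (take (cuts ! (k+1) - cuts ! k) (drop (cuts ! k) C))))
             [0..<length cuts - 1]))"

definition theta_basis :: "'a set list \<Rightarrow> 'a lincomb" where
  "theta_basis C D = (-1) ^ length C * int (card {S. S \<subseteq> {1..<length C} \<and> coarsen C S = D})"

definition theta :: "'a lincomb \<Rightarrow> 'a lincomb" where
  "theta x = lin_ext theta_basis x"

definition phi_ehr :: "'a set \<Rightarrow> ('a \<times> 'a) set \<Rightarrow> 'a lincomb" where
  "phi_ehr A R = theta (phi_iota A R)"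

definition eps'_basis :: "'a set list \<Rightarrow> unit \<Rightarrow> int" where
  "eps'_basis C _ = (if length C \<le> 1 then 1 else 0)"

definition eps' :: "'a lincomb \<Rightarrow> int" where
  "eps' x = lin_ext eps'_basis x ()"

end

theory Submission
  imports Defs "HOL-Library.Indicator_Function"
begin

text \<open>
  Expanding \<open>\<theta>\<^sub>-\<^sub>1\<close> on the basis, the coefficient in \<open>\<phi>\<^sub>e\<^sub>h\<^sub>r(T)\<close> of the composition
  induced by a surjection \<open>g\<close> is a signed count of the \<open>f \<in> L(T)\<close> whose blocks merge into
  those of \<open>g\<close>, i.e. with \<open>g = H \<circ> f\<close> for a monotone \<open>H\<close>: the cut sets of
  \<open>\<theta>\<^sub>-\<^sub>1\<close> correspond bijectively to these coarsenings. The signed count is \<open>1\<close> for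
  \<open>g \<in> L'(T)\<close> and \<open>0\<close> otherwise. If a relation of \<open>T\<close> descends from the top block
  \<open>B\<close> of \<open>g\<close> to a lower block, no \<open>f\<close> qualifies. Otherwise every such \<open>f\<close> lies
  strictly lower on \<open>A - B\<close> than on \<open>B\<close>, so it is a map on \<open>A - B\<close> coarsening to
  \<open>g\<close> stacked below an arbitrary element of \<open>L(T|\<^sub>B)\<close>; the sum factors, and the
  second factor is the case of constant \<open>g\<close>:
  \<open>\<Sum>f\<in>L(T). (-1)^(cl T + max f) = 1\<close>. That identity follows by grouping the \<open>f\<close>
  by their top block, which ranges over the nonempty unions of maximal classes of \<open>T\<close>,
  over which the signs \<open>(-1)^cl\<close> sum to \<open>-1\<close>. Finally \<open>\<epsilon>'\<close> keeps the
  compositions with at most one block, and exactly one \<open>f \<in> L'(T)\<close> has \<open>max f \<le> 1\<close>.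
\<close>

section \<open>Surjections onto initial segments\<close>

lemma surj_mapsI:
  assumes "\<And>x. x \<notin> A \<Longrightarrow> f x = 0" and "f ` A = {1..n}"
  shows "f \<in> surj_maps A"
  using assms by (auto simp: surj_maps_def)

lemma surj_maps_outside: "f \<in> surj_maps A \<Longrightarrow> x \<notin> A \<Longrightarrow> f x = 0"
  by (auto simp: surj_maps_def)

lemma surj_maps_image:
  assumes "f \<in> surj_maps A"
  shows "f ` A = {1..max_f A f}"
proof -
  from assms obtain n where "f ` A = {1..n}" by (auto simp: surj_maps_def)
  then show ?thesis by (simp add: max_f_def)
qed

lemma surj_maps_bounds:
  assumes "f \<in> surj_maps A" and "x \<in> A"
  shows "1 \<le> f x" and "f x \<le> max_f A f"
  using surj_maps_image[OF assms(1)] assms(2) by auto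

lemma max_f_pos: "f \<in> surj_maps A \<Longrightarrow> A \<noteq> {} \<Longrightarrow> 0 < max_f A f"
  using surj_maps_bounds by fastforce

lemma max_f_cong: "(\<And>x. x \<in> A \<Longrightarrow> f x = g x) \<Longrightarrow> max_f A f = max_f A g"
  unfolding max_f_def by (metis image_cong)

lemma max_f_empty [simp]: "max_f {} f = 0"
  by (simp add: max_f_def)

lemma surj_maps_empty: "surj_maps {} = {\<lambda>_. 0}"
  by (auto simp: surj_maps_def)

lemma finite_surj_maps:
  assumes "finite A"
  shows "finite (surj_maps A)"
proof (rule finite_subset)
  show "surj_maps A \<subseteq> {f. \<forall>x. (x \<in> A \<longrightarrow> f x \<in> {..card A}) \<and> (x \<notin> A \<longrightarrow> f x = 0)}"
    using surj_maps_bounds surj_maps_outside card_image_le[OF assms]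
    by (fastforce simp: max_f_def intro: order_trans)
  show "finite {f. \<forall>x. (x \<in> A \<longrightarrow> f x \<in> {..card A}) \<and> (x \<notin> A \<longrightarrow> f x = 0)}"
    by (intro finite_set_of_finite_funs assms finite_atMost)
qed

lemma length_comp_of [simp]: "length (comp_of A f) = max_f A f"
  by (simp add: comp_of_def del: upt_Suc)

lemma nth_comp_of: "i < max_f A f \<Longrightarrow> comp_of A f ! i = {x\<in>A. f x = Suc i}"
  by (simp add: comp_of_def del: upt_Suc)

lemma comp_of_empty [simp]: "comp_of {} f = []"
  by (simp add: comp_of_def max_f_def)

lemma inj_on_comp_of: "inj_on (comp_of A) (surj_maps A)"
proof (rule inj_onI, rule ext)
  fix f g x
  assume f: "f \<in> surj_maps A" and g: "g \<in> surj_maps A" and eq: "comp_of A f = comp_of A g"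
  show "f x = g x"
  proof (cases "x \<in> A")
    case True
    have "max_f A f = max_f A g" using arg_cong[OF eq, of length] by simp
    moreover have "f x - 1 < max_f A f" "x \<in> comp_of A f ! (f x - 1)"
      using surj_maps_bounds[OF f True] True by (auto simp: nth_comp_of)
    ultimately show ?thesis
      using eq surj_maps_bounds[OF f True] by (auto simp: nth_comp_of)
  qed (use f g surj_maps_outside in metis)
qed

lemma L_subset_surj_maps: "L A R \<subseteq> surj_maps A"
  by (auto simp: L_def)

lemma L'_subset_surj_maps: "L' A R \<subseteq> surj_maps A"
  by (auto simp: L'_def)

lemma finite_L: "finite A \<Longrightarrow> finite (L A R)"
  using finite_subset[OF L_subset_surj_maps finite_surj_maps] .

lemma L_empty: "quasi_order {} R \<Longrightarrow> L {} R = {\<lambda>_. 0}"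
  by (auto simp: L_def surj_maps_empty quasi_order_def)

lemma indicator_in_surj_maps: "(indicator A :: 'a \<Rightarrow> nat) \<in> surj_maps A"
proof (cases "A = {}")
  case False
  then have "(indicator A :: 'a \<Rightarrow> nat) ` A = {1..1}" by auto
  then show ?thesis by (intro surj_mapsI) auto
qed (simp add: surj_maps_empty fun_eq_iff)

lemma max_f_indicator: "A \<noteq> {} \<Longrightarrow> max_f A (indicator A :: 'a \<Rightarrow> nat) = 1"
proof -
  assume "A \<noteq> {}"
  then have "(indicator A :: 'a \<Rightarrow> nat) ` A = {1}" by auto
  then show ?thesis by (simp add: max_f_def)
qed

lemma surj_maps_max_f_le_1: "{f \<in> surj_maps A. max_f A f \<le> 1} = {indicator A}"
proof (intro equalityI subsetI)
  fix f assume f: "f \<in> {f \<in> surj_maps A. max_f A f \<le> 1}"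
  then have "f x = indicator A x" for x
    using surj_maps_bounds[of f A x] surj_maps_outside[of f A x] by (cases "x \<in> A") auto
  then show "f \<in> {indicator A}" by auto
next
  fix f assume "f \<in> {indicator A :: 'a \<Rightarrow> nat}"
  then show "f \<in> {f \<in> surj_maps A. max_f A f \<le> 1}"
    using indicator_in_surj_maps max_f_indicator[of A] by (cases "A = {}") (auto simp: max_f_def)
qed

lemma L'_empty: "quasi_order {} R \<Longrightarrow> L' {} R = {\<lambda>_. 0}"
  by (auto simp: L'_def surj_maps_empty quasi_order_def)

lemma lin_ext_scaled_sum_comps:
  assumes "finite A" and "F \<subseteq> surj_maps A"
  shows "lin_ext g (\<lambda>C. c * sum_comps A F C) D = c * (\<Sum>f\<in>F. g (comp_of A f) D)"
proof (cases "c = 0")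
  case False
  have inj: "inj_on (comp_of A) F"
    using inj_on_subset[OF inj_on_comp_of assms(2)] .
  have count: "sum_comps A F (comp_of A f) = 1" if "f \<in> F" for f
  proof -
    have "{h \<in> F. comp_of A h = comp_of A f} = {f}"
      using inj that by (auto dest: inj_onD)
    then show ?thesis by (simp add: sum_comps_def)
  qed
  have "{C. c * sum_comps A F C \<noteq> 0} = comp_of A ` F"
  proof (intro equalityI subsetI)
    fix C assume "C \<in> {C. c * sum_comps A F C \<noteq> 0}"
    then have "{f \<in> F. comp_of A f = C} \<noteq> {}" by (force simp: sum_comps_def)
    then show "C \<in> comp_of A ` F" by blast
  qed (use False count in auto)
  then show ?thesis
    unfolding lin_ext_def using count by (simp add: sum.reindex[OF inj] sum_distrib_left)
qed (simp add: lin_ext_def)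

section \<open>Merging consecutive blocks\<close>

definition coarsen_map :: "'a set \<Rightarrow> nat set \<Rightarrow> ('a \<Rightarrow> nat) \<Rightarrow> 'a \<Rightarrow> nat" where
  "coarsen_map A S f x = (if x \<in> A then Suc (card {s\<in>S. s < f x}) else 0)"

lemma card_filter_less_Suc:
  assumes "finite S"
  shows "card {s\<in>S. s < Suc v} = card {s\<in>S. s < v} + (if v \<in> S then 1 else 0)"
proof -
  have "{s\<in>S. s < Suc v} = {s\<in>S. s < v} \<union> ({v} \<inter> S)" by auto
  moreover have "{s\<in>S. s < v} \<inter> ({v} \<inter> S) = {}" by auto
  ultimately show ?thesis using assms by (simp add: card_Un_disjoint)
qed

lemma coarsen_map_image:
  assumes f: "f \<in> surj_maps A" and "A \<noteq> {}" and S: "S \<subseteq> {1..<max_f A f}"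
  shows "coarsen_map A S f ` A = {1..Suc (card S)}"
proof -
  let ?n = "max_f A f"
  define c where "c v = card {s\<in>S. s < v}" for v
  have fS: "finite S" using S finite_subset by blast
  have "coarsen_map A S f ` A = (\<lambda>v. Suc (c v)) ` f ` A"
    by (auto simp: coarsen_map_def c_def image_iff)
  also have "\<dots> = (\<lambda>v. Suc (c v)) ` {1..?n}"
    using surj_maps_image[OF f] by simp
  also have "\<dots> = {1..Suc (card S)}"
  proof (intro equalityI subsetI)
    have "c v \<le> card S" for v
      unfolding c_def using fS by (intro card_mono) auto
    then show "y \<in> {1..Suc (card S)}" if "y \<in> (\<lambda>v. Suc (c v)) ` {1..?n}" for y
      using that by auto
  next
    fix y assume y: "y \<in> {1..Suc (card S)}"
    have "\<bar>int (c (Suc v)) - int (c v)\<bar> \<le> 1" for v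
      using card_filter_less_Suc[OF fS, of v] by (simp add: c_def)
    moreover have "c 1 = 0" using S by (auto simp: c_def)
    moreover have "c ?n = card S" using S by (auto simp: c_def intro!: arg_cong[where f = card])
    moreover have "1 \<le> ?n" using max_f_pos[OF f \<open>A \<noteq> {}\<close>] by simp
    ultimately have "\<exists>v. 1 \<le> v \<and> v \<le> ?n \<and> int (c v) = int (y - 1)"
      using y by (intro nat_intermed_int_val) auto
    then obtain v where "1 \<le> v" "v \<le> ?n" "c v = y - 1" by auto
    then show "y \<in> (\<lambda>v. Suc (c v)) ` {1..?n}" using y by force
  qed
  finally show ?thesis .
qed

lemma coarsen_map_in_surj_maps:
  assumes "f \<in> surj_maps A" and "S \<subseteq> {1..<max_f A f}"
  shows "coarsen_map A S f \<in> surj_maps A"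
proof (cases "A = {}")
  case True
  then show ?thesis by (simp add: surj_maps_empty coarsen_map_def fun_eq_iff)
next
  case False
  show ?thesis
    by (rule surj_mapsI[OF _ coarsen_map_image[OF assms(1) False assms(2)]])
       (simp add: coarsen_map_def)
qed

lemma set_take_drop:
  assumes "b \<le> length xs"
  shows "set (take (b - a) (drop a xs)) = (\<lambda>i. xs ! i) ` {a..<b}"
proof (intro equalityI subsetI)
  fix y assume "y \<in> set (take (b - a) (drop a xs))"
  then obtain i where "i < length (take (b - a) (drop a xs))" "y = take (b - a) (drop a xs) ! i"
    by (auto simp: in_set_conv_nth)
  then show "y \<in> (\<lambda>i. xs ! i) ` {a..<b}"
    using assms by (intro image_eqI[where x = "a + i"]) auto
next
  fix y assume "y \<in> (\<lambda>i. xs ! i) ` {a..<b}"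
  then obtain i where i: "a \<le> i" "i < b" "y = xs ! i" by auto
  then show "y \<in> set (take (b - a) (drop a xs))"
    using nth_mem[of "i - a" "take (b - a) (drop a xs)"] assms by auto
qed

lemma card_below_strict_mono_image:
  fixes e :: "nat \<Rightarrow> nat"
  assumes mono: "\<And>i j. i < j \<Longrightarrow> j \<le> Suc p \<Longrightarrow> e i < e j"
    and "k \<le> p" and "e k \<le> i" and "i < e (Suc k)"
  shows "card {s \<in> e ` {1..p}. s \<le> i} = k"
proof -
  have mono_le: "e j \<le> e j'" if "j \<le> j'" "j' \<le> Suc p" for j j'
    using mono[of j j'] that by (cases "j = j'") auto
  have "{s \<in> e ` {1..p}. s \<le> i} = e ` {1..k}"
  proof (intro equalityI subsetI)
    fix s assume "s \<in> {s \<in> e ` {1..p}. s \<le> i}"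
    then obtain j where j: "j \<in> {1..p}" "s = e j" "e j \<le> i" by auto
    have "j \<le> k"
    proof (rule ccontr)
      assume "\<not> j \<le> k"
      then have "e (Suc k) \<le> e j" using j by (intro mono_le) auto
      then show False using j \<open>i < e (Suc k)\<close> by linarith
    qed
    then show "s \<in> e ` {1..k}" using j by auto
  next
    fix s assume "s \<in> e ` {1..k}"
    then obtain j where "j \<in> {1..k}" "s = e j" by auto
    then show "s \<in> {s \<in> e ` {1..p}. s \<le> i}"
      using mono_le[of j k] assms(2,3) by auto
  qed
  moreover have "inj_on e {1..k}"
  proof (rule inj_onI)
    fix j j' assume "j \<in> {1..k}" "j' \<in> {1..k}" "e j = e j'"
    then show "j = j'"
      using mono[of j j'] mono[of j' j] \<open>k \<le> p\<close> by (cases j j' rule: linorder_cases) auto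
  qed
  ultimately show ?thesis by (simp add: card_image)
qed

lemma card_below_iff_between_cuts:
  fixes e :: "nat \<Rightarrow> nat"
  assumes mono: "\<And>i j. i < j \<Longrightarrow> j \<le> Suc p \<Longrightarrow> e i < e j"
    and i: "e 0 \<le> i" "i < e (Suc p)" and "k \<le> p"
  shows "card {s \<in> e ` {1..p}. s \<le> i} = k \<longleftrightarrow> e k \<le> i \<and> i < e (Suc k)"
proof -
  have "\<exists>k'<j. e k' \<le> i \<and> i < e (Suc k')" if "j \<le> Suc p" "i < e j" for j
    using that
  proof (induction j)
    case (Suc j)
    show ?case
    proof (cases "i < e j")
      case True
      then show ?thesis using Suc by (meson less_SucI Suc_leD)
    next
      case False
      then show ?thesis using Suc.prems by (intro exI[of _ j]) auto
    qed
  qed (use i in simp)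
  from this[OF order.refl i(2)] obtain k' where k': "k' \<le> p" "e k' \<le> i" "i < e (Suc k')"
    by (auto simp: less_Suc_eq_le)
  have "card {s \<in> e ` {1..p}. s \<le> i} = k'"
    using card_below_strict_mono_image[OF mono k'] .
  then show ?thesis
    using k' card_below_strict_mono_image[OF mono \<open>k \<le> p\<close>] by auto
qed

lemma coarsen_cuts:
  assumes "C \<noteq> []" and S: "S \<subseteq> {1..<length C}"
  obtains e where "\<And>i j. i < j \<Longrightarrow> j \<le> Suc (card S) \<Longrightarrow> e i < e j"
    and "e 0 = 0" and "e (Suc (card S)) = length C" and "S = e ` {1..card S}"
    and "coarsen C S = map (\<lambda>k. \<Union> (set (take (e (Suc k) - e k) (drop (e k) C)))) [0..<Suc (card S)]"
proof -
  define p where "p = card S"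
  define ss where "ss = sorted_list_of_set S"
  define cuts where "cuts = [0] @ ss @ [length C]"
  define e where "e j = cuts ! j" for j
  have fS: "finite S" using S finite_subset by blast
  have lss: "length ss = p" by (simp add: ss_def p_def)
  have lc: "length cuts = Suc (Suc p)" by (simp add: cuts_def lss)
  have "sorted_wrt (<) cuts"
    using assms fS strict_sorted_list_of_set[of S] by (auto simp: cuts_def ss_def sorted_wrt_append)
  then have "e i < e j" if "i < j" "j \<le> Suc p" for i j
    unfolding e_def using sorted_wrt_nth_less that lc by fastforce
  moreover have "e 0 = 0" and "e (Suc p) = length C"
    by (simp_all add: e_def cuts_def nth_append lss)
  moreover have "S = e ` {1..p}"
  proof -
    have "e (Suc i) = ss ! i" if "i < p" for i
      using that lss by (simp add: e_def cuts_def nth_append)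
    then have "e ` {1..p} = (\<lambda>i. ss ! i) ` {..<p}"
      unfolding image_Suc_lessThan[symmetric] image_image by (intro image_cong) auto
    also have "\<dots> = set ss"
      using lss by (auto simp: set_conv_nth)
    finally show ?thesis using fS by (simp add: ss_def)
  qed
  moreover have "coarsen C S = map (\<lambda>k. \<Union> (set (take (e (Suc k) - e k) (drop (e k) C)))) [0..<Suc p]"
    using assms(1) lc by (simp add: coarsen_def Let_def cuts_def ss_def e_def)
  ultimately show thesis using that unfolding p_def by blast
qed

lemma
  assumes "C \<noteq> []" and S: "S \<subseteq> {1..<length C}"
  shows length_coarsen: "length (coarsen C S) = Suc (card S)"
    and nth_coarsen: "k \<le> card S \<Longrightarrow>
      coarsen C S ! k = \<Union> ((\<lambda>i. C ! i) ` {i. i < length C \<and> card {s\<in>S. s \<le> i} = k})"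
proof -
  obtain e where mono: "\<And>i j. i < j \<Longrightarrow> j \<le> Suc (card S) \<Longrightarrow> e i < e j"
    and e0: "e 0 = 0" and eL: "e (Suc (card S)) = length C" and Se: "S = e ` {1..card S}"
    and coarsen_eq: "coarsen C S = map (\<lambda>k. \<Union> (set (take (e (Suc k) - e k) (drop (e k) C)))) [0..<Suc (card S)]"
    using coarsen_cuts[OF assms] by blast
  show "length (coarsen C S) = Suc (card S)" by (simp add: coarsen_eq)
  assume k: "k \<le> card S"
  have "e (Suc k) \<le> length C"
    using mono[of "Suc k" "Suc (card S)"] eL k by (cases "k = card S") auto
  then have "coarsen C S ! k = \<Union> ((\<lambda>i. C ! i) ` {e k..<e (Suc k)})"
    using k by (simp add: coarsen_eq set_take_drop del: upt_Suc)
  also have "{e k..<e (Suc k)} = {i. i < length C \<and> card {s\<in>S. s \<le> i} = k}"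
  proof -
    have "card {s\<in>S. s \<le> i} = k \<longleftrightarrow> e k \<le> i \<and> i < e (Suc k)" if "i < length C" for i
      using card_below_iff_between_cuts[of "card S" e i k, folded Se] mono e0 eL k that
      by simp
    then show ?thesis using \<open>e (Suc k) \<le> length C\<close>
      by (intro set_eqI) (metis (mono_tags, lifting) atLeastLessThan_iff mem_Collect_eq order.strict_trans2)
  qed
  finally show "coarsen C S ! k = \<Union> ((\<lambda>i. C ! i) ` {i. i < length C \<and> card {s\<in>S. s \<le> i} = k})" .
qed

lemma coarsen_comp_of:
  assumes f: "f \<in> surj_maps A" and S: "S \<subseteq> {1..<max_f A f}"
  shows "coarsen (comp_of A f) S = comp_of A (coarsen_map A S f)"
proof (cases "A = {}")
  case True
  then show ?thesis by (simp add: coarsen_def)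
next
  case False
  let ?C = "comp_of A f" and ?g = "coarsen_map A S f"
  have C: "?C \<noteq> []" using max_f_pos[OF f False] by (metis length_comp_of less_irrefl list.size(3))
  have S': "S \<subseteq> {1..<length ?C}" using S by simp
  have max_g: "max_f A ?g = Suc (card S)"
    using coarsen_map_image[OF f False S] by (simp add: max_f_def)
  show ?thesis
  proof (rule nth_equalityI)
    show "length (coarsen ?C S) = length (comp_of A ?g)"
      by (simp add: length_coarsen[OF C S'] max_g)
  next
    fix k assume "k < length (coarsen ?C S)"
    then have k: "k \<le> card S" by (simp add: length_coarsen[OF C S'])
    have "coarsen ?C S ! k = \<Union> ((\<lambda>i. ?C ! i) ` {i. i < max_f A f \<and> card {s\<in>S. s \<le> i} = k})"
      using nth_coarsen[OF C S' k] by simp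
    also have "\<dots> = {x\<in>A. card {s\<in>S. s < f x} = k}"
    proof -
      have "x \<in> A \<and> card {s\<in>S. s < f x} = k \<longleftrightarrow>
          (\<exists>i. i < max_f A f \<and> card {s\<in>S. s \<le> i} = k \<and> x \<in> A \<and> f x = Suc i)" for x
        using surj_maps_bounds[OF f, of x] less_Suc_eq_le
        by (cases "f x") (auto simp del: less_Suc_eq_le)
      then show ?thesis by (auto simp: nth_comp_of)
    qed
    also have "\<dots> = comp_of A ?g ! k"
      using k by (auto simp: nth_comp_of max_g coarsen_map_def)
    finally show "coarsen ?C S ! k = comp_of A ?g ! k" .
  qed
qed

definition mono_coarsening :: "'a set \<Rightarrow> ('a \<Rightarrow> nat) \<Rightarrow> ('a \<Rightarrow> nat) \<Rightarrow> bool" where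
  "mono_coarsening A f g \<longleftrightarrow> (\<forall>x\<in>A. \<forall>y\<in>A. f x \<le> f y \<longrightarrow> g x \<le> g y)"

lemma mono_coarsening_in_L':
  assumes "quasi_order A R" and "f \<in> L A R" and "mono_coarsening A f g" and "g \<in> surj_maps A"
  shows "g \<in> L' A R"
proof -
  have "g a \<le> g b" if "(a, b) \<in> R" for a b
  proof -
    have "f a \<le> f b" "a \<in> A" "b \<in> A"
      using assms(1,2) that by (auto simp: L_def quasi_order_def)
    then show ?thesis using assms(3) by (simp add: mono_coarsening_def)
  qed
  then show ?thesis using assms(4) by (simp add: L'_def)
qed

lemma mono_coarsening_coarsen_map:
  assumes "finite S"
  shows "mono_coarsening A f (coarsen_map A S f)"
  unfolding mono_coarsening_def coarsen_map_def using assms by (auto intro: card_mono)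

lemma inj_on_coarsen_map:
  assumes f: "f \<in> surj_maps A"
  shows "inj_on (\<lambda>S. coarsen_map A S f) (Pow {1..<max_f A f})"
proof (rule inj_onI)
  fix S1 S2
  assume S1: "S1 \<in> Pow {1..<max_f A f}" and S2: "S2 \<in> Pow {1..<max_f A f}"
    and eq: "coarsen_map A S1 f = coarsen_map A S2 f"
  have fin: "finite S1" "finite S2" using S1 S2 finite_subset by auto
  have rank_eq: "card {s\<in>S1. s < v} = card {s\<in>S2. s < v}" if "v \<in> {1..max_f A f}" for v
  proof -
    have "v \<in> f ` A" using that surj_maps_image[OF f] by simp
    then obtain x where "x \<in> A" "f x = v" by blast
    then show ?thesis using fun_cong[OF eq, of x] by (simp add: coarsen_map_def)
  qed
  have same: "s \<in> S1 \<longleftrightarrow> s \<in> S2" if "s \<in> {1..<max_f A f}" for s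
  proof -
    have "card {t\<in>S1. t < s} + (if s \<in> S1 then 1 else 0) = card {t\<in>S2. t < s} + (if s \<in> S2 then 1 else 0)"
      using rank_eq[of "Suc s"] that by (simp add: card_filter_less_Suc[OF fin(1)] card_filter_less_Suc[OF fin(2)])
    moreover have "card {t\<in>S1. t < s} = card {t\<in>S2. t < s}"
      using rank_eq[of s] that by simp
    ultimately show ?thesis by (auto split: if_splits)
  qed
  show "S1 = S2"
    using same S1 S2 by (intro set_eqI) auto
qed

lemma Suc_card_jumps:
  fixes H :: "nat \<Rightarrow> nat"
  assumes "H 1 = 1"
    and step: "\<And>v. 1 \<le> v \<Longrightarrow> v < n \<Longrightarrow> H v \<le> H (Suc v) \<and> H (Suc v) \<le> Suc (H v)"
    and "1 \<le> v" "v \<le> n"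
  shows "Suc (card {s \<in> {s\<in>{1..<n}. H s < H (Suc s)}. s < v}) = H v"
proof -
  define J where "J = {s\<in>{1..<n}. H s < H (Suc s)}"
  have fin: "finite J" by (simp add: J_def)
  show ?thesis
    unfolding J_def[symmetric] using assms(3,4)
  proof (induction v rule: dec_induct)
    case base
    have "{s \<in> J. s < 1} = {}" by (auto simp: J_def)
    then show ?case using \<open>H 1 = 1\<close> by simp
  next
    case (step v)
    then have "H (Suc v) = H v + (if v \<in> J then 1 else 0)"
      using assms(2)[of v] by (auto simp: J_def)
    then show ?case using card_filter_less_Suc[OF fin, of v] step by simp
  qed
qed

lemma mono_coarsening_factor:
  assumes f: "f \<in> surj_maps A" and fg: "mono_coarsening A f g"
  obtains H where "\<And>x. x \<in> A \<Longrightarrow> g x = H (f x)"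
    and "\<And>u v. u \<le> v \<Longrightarrow> u \<in> {1..max_f A f} \<Longrightarrow> v \<in> {1..max_f A f} \<Longrightarrow> H u \<le> H v"
proof -
  define H where "H v = g (inv_into A f v)" for v
  have inv: "inv_into A f v \<in> A" "f (inv_into A f v) = v" if "v \<in> {1..max_f A f}" for v
  proof -
    have "v \<in> f ` A" using that surj_maps_image[OF f] by simp
    then show "inv_into A f v \<in> A" "f (inv_into A f v) = v"
      by (simp_all add: inv_into_into f_inv_into_f)
  qed
  have fg': "g x \<le> g y" if "x \<in> A" "y \<in> A" "f x \<le> f y" for x y
    using fg that unfolding mono_coarsening_def by blast
  have "g x = H (f x)" if "x \<in> A" for x
  proof -
    have "f x \<in> {1..max_f A f}" using surj_maps_bounds[OF f that] by simp
    then show ?thesis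
      using fg'[OF that inv(1)] fg'[OF inv(1) that] inv(2) unfolding H_def by fastforce
  qed
  moreover have "H u \<le> H v" if "u \<le> v" "u \<in> {1..max_f A f}" "v \<in> {1..max_f A f}" for u v
    using fg'[OF inv(1)[OF that(2)] inv(1)[OF that(3)]] that inv(2) unfolding H_def by simp
  ultimately show thesis using that by blast
qed

lemma surj_maps_factor_steps:
  assumes f: "f \<in> surj_maps A" and g: "g \<in> surj_maps A" and "A \<noteq> {}"
    and gH: "\<And>x. x \<in> A \<Longrightarrow> g x = H (f x)"
    and H_mono: "\<And>u v. u \<le> v \<Longrightarrow> u \<in> {1..max_f A f} \<Longrightarrow> v \<in> {1..max_f A f} \<Longrightarrow> H u \<le> H v"
  shows "H 1 = 1" and "\<And>v. 1 \<le> v \<Longrightarrow> v < max_f A f \<Longrightarrow> H (Suc v) \<le> Suc (H v)"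
proof -
  let ?n = "max_f A f"
  have H_bounds: "1 \<le> H v" "H v \<le> max_f A g" if "v \<in> {1..?n}" for v
  proof -
    have "v \<in> f ` A" using that surj_maps_image[OF f] by simp
    then obtain x where "x \<in> A" "v = f x" by blast
    then show "1 \<le> H v" "H v \<le> max_f A g" using surj_maps_bounds[OF g] gH by auto
  qed
  have n: "1 \<le> ?n" using max_f_pos[OF f \<open>A \<noteq> {}\<close>] by simp
  have "1 \<in> g ` A" using surj_maps_image[OF g] max_f_pos[OF g \<open>A \<noteq> {}\<close>] by simp
  then obtain z where z: "g z = 1" "z \<in> A" by (metis imageE)
  have "f z \<in> {1..?n}" using surj_maps_bounds[OF f z(2)] by simp
  then have "H 1 \<le> H (f z)" using n by (intro H_mono) auto
  then show "H 1 = 1" using H_bounds(1)[of 1] n z gH[OF z(2)] by simp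
  show "H (Suc v) \<le> Suc (H v)" if v: "1 \<le> v" "v < ?n" for v
  proof (rule ccontr)
    assume jump: "\<not> H (Suc v) \<le> Suc (H v)"
    have "H (Suc v) \<le> max_f A g" "1 \<le> H v" using H_bounds v by auto
    then have "Suc (H v) \<in> g ` A" using jump surj_maps_image[OF g] by simp
    then obtain z where z: "g z = Suc (H v)" "z \<in> A" by (metis imageE)
    have fz: "f z \<in> {1..?n}" using surj_maps_bounds[OF f z(2)] by simp
    show False
    proof (cases "f z \<le> v")
      case True
      then have "H (f z) \<le> H v" using fz v by (intro H_mono) auto
      then show False using z gH[OF z(2)] by simp
    next
      case False
      then have "H (Suc v) \<le> H (f z)" using fz v by (intro H_mono) auto
      then show False using z gH[OF z(2)] jump by simp
    qed
  qed
qed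

lemma ex_coarsen_map:
  assumes f: "f \<in> surj_maps A" and g: "g \<in> surj_maps A" and fg: "mono_coarsening A f g"
  shows "\<exists>S \<subseteq> {1..<max_f A f}. coarsen_map A S f = g"
proof (cases "A = {}")
  case True
  then have "coarsen_map A {} f = g"
    using g by (auto simp: surj_maps_empty coarsen_map_def)
  then show ?thesis by blast
next
  case False
  let ?n = "max_f A f"
  obtain H where gH: "\<And>x. x \<in> A \<Longrightarrow> g x = H (f x)"
    and H_mono: "\<And>u v. u \<le> v \<Longrightarrow> u \<in> {1..?n} \<Longrightarrow> v \<in> {1..?n} \<Longrightarrow> H u \<le> H v"
    using mono_coarsening_factor[OF f fg] by blast
  note H_steps = surj_maps_factor_steps[OF f g False gH H_mono]
  have H_step: "H v \<le> H (Suc v) \<and> H (Suc v) \<le> Suc (H v)" if "1 \<le> v" "v < ?n" for v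
    using that H_steps(2) H_mono[of v "Suc v"] by simp
  define S where "S = {s\<in>{1..<?n}. H s < H (Suc s)}"
  have "coarsen_map A S f x = g x" for x
  proof (cases "x \<in> A")
    case True
    have "Suc (card {s\<in>S. s < f x}) = H (f x)"
      unfolding S_def using H_steps(1) H_step surj_maps_bounds[OF f True] by (rule Suc_card_jumps)
    then show ?thesis using True gH by (simp add: coarsen_map_def)
  qed (simp add: coarsen_map_def surj_maps_outside[OF g])
  moreover have "S \<subseteq> {1..<?n}" by (auto simp: S_def)
  ultimately show ?thesis by blast
qed

lemma bij_betw_coarsen_map:
  assumes "f \<in> surj_maps A"
  shows "bij_betw (\<lambda>S. coarsen_map A S f) (Pow {1..<max_f A f}) {g \<in> surj_maps A. mono_coarsening A f g}"
  unfolding bij_betw_def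
proof (intro conjI inj_on_coarsen_map[OF assms] equalityI subsetI)
  show "g \<in> {g \<in> surj_maps A. mono_coarsening A f g}" if "g \<in> (\<lambda>S. coarsen_map A S f) ` Pow {1..<max_f A f}" for g
    using that coarsen_map_in_surj_maps[OF assms]
      mono_coarsening_coarsen_map[OF finite_subset[OF _ finite_atLeastLessThan]] by auto
  show "g \<in> (\<lambda>S. coarsen_map A S f) ` Pow {1..<max_f A f}" if "g \<in> {g \<in> surj_maps A. mono_coarsening A f g}" for g
    using that ex_coarsen_map[OF assms] by blast
qed

lemma theta_basis_comp_of:
  assumes "f \<in> surj_maps A"
  shows "theta_basis (comp_of A f) D =
    (-1) ^ max_f A f * int (card {g \<in> surj_maps A. mono_coarsening A f g \<and> comp_of A g = D})"
proof -
  let ?\<phi> = "\<lambda>S. coarsen_map A S f"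
  let ?X = "{S \<in> Pow {1..<max_f A f}. comp_of A (?\<phi> S) = D}"
  have bij: "bij_betw ?\<phi> ?X {g \<in> surj_maps A. mono_coarsening A f g \<and> comp_of A g = D}"
    using bij_betw_coarsen_map[OF assms] unfolding bij_betw_def
    by (auto intro: inj_on_subset)
  have "{S. S \<subseteq> {1..<length (comp_of A f)} \<and> coarsen (comp_of A f) S = D} = ?X"
    using coarsen_comp_of[OF assms] by auto
  then show ?thesis
    using bij_betw_same_card[OF bij] by (simp add: theta_basis_def)
qed

section \<open>Quasi-orders and their maximal classes\<close>

lemma quasi_order_restrict:
  assumes "quasi_order A R" and "X \<subseteq> A"
  shows "quasi_order X (R \<inter> X \<times> X)"
  using assms unfolding quasi_order_def trans_def by blast

lemma equiv_quasi_order: "quasi_order A R \<Longrightarrow> equiv A (R \<inter> R\<inverse>)"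
  unfolding quasi_order_def equiv_def refl_on_def sym_def trans_def by blast

lemma quotient_restrict_saturated:
  assumes qo: "quasi_order A R" and "B \<subseteq> A"
    and saturated: "\<And>x y. x \<in> B \<Longrightarrow> (x, y) \<in> R \<Longrightarrow> (y, x) \<in> R \<Longrightarrow> y \<in> B"
  shows "B // ((R \<inter> B \<times> B) \<inter> (R \<inter> B \<times> B)\<inverse>) = {C \<in> A // (R \<inter> R\<inverse>). C \<subseteq> B}"
proof -
  have class_eq: "((R \<inter> B \<times> B) \<inter> (R \<inter> B \<times> B)\<inverse>) `` {x} = (R \<inter> R\<inverse>) `` {x}" if "x \<in> B" for x
    using that saturated by auto
  have refl: "x \<in> (R \<inter> R\<inverse>) `` {x}" if "x \<in> A" for x
    using qo that by (auto simp: quasi_order_def)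
  show ?thesis
  proof (intro equalityI subsetI)
    fix C assume "C \<in> B // ((R \<inter> B \<times> B) \<inter> (R \<inter> B \<times> B)\<inverse>)"
    then obtain x where x: "x \<in> B" "C = (R \<inter> R\<inverse>) `` {x}"
      using class_eq by (auto elim: quotientE)
    then show "C \<in> {C \<in> A // (R \<inter> R\<inverse>). C \<subseteq> B}"
      using \<open>B \<subseteq> A\<close> saturated by (auto intro: quotientI)
  next
    fix C assume "C \<in> {C \<in> A // (R \<inter> R\<inverse>). C \<subseteq> B}"
    then obtain x where x: "x \<in> A" "C = (R \<inter> R\<inverse>) `` {x}" "C \<subseteq> B"
      by (auto elim: quotientE)
    then have "x \<in> B" using refl by auto
    then show "C \<in> B // ((R \<inter> B \<times> B) \<inter> (R \<inter> B \<times> B)\<inverse>)"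
      using class_eq x(2) by (metis quotientI)
  qed
qed

lemma quotient_subset_Union:
  assumes "equiv A r" and "X \<subseteq> A // r"
  shows "{C \<in> A // r. C \<subseteq> \<Union> X} = X"
proof (intro equalityI subsetI)
  fix C assume C: "C \<in> {C \<in> A // r. C \<subseteq> \<Union> X}"
  then obtain c where "c \<in> C" using in_quotient_imp_non_empty[OF assms(1)] by blast
  then obtain C' where "C' \<in> X" "c \<in> C'" using C by blast
  then show "C \<in> X" using quotient_disj[OF assms(1)] C \<open>c \<in> C\<close> assms(2) by blast
qed (use assms(2) in auto)

lemma cl_empty [simp]: "cl {} R = 0"
  by (simp add: cl_def)

lemma exists_maximal:
  assumes "finite A" and "A \<noteq> {}" and "quasi_order A R"
  obtains x where "x \<in> A" and "\<forall>y. (x, y) \<in> R \<longrightarrow> (y, x) \<in> R"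
proof -
  have R: "R \<subseteq> A \<times> A" and refl: "\<And>x. x \<in> A \<Longrightarrow> (x, x) \<in> R" and "trans R"
    using assms(3) by (auto simp: quasi_order_def)
  define m where "m = Min ((\<lambda>x. card (R `` {x})) ` A)"
  have "m \<in> (\<lambda>x. card (R `` {x})) ` A" using assms(1,2) by (simp add: m_def)
  then obtain x where x: "x \<in> A" and "card (R `` {x}) = m" by auto
  then have min: "card (R `` {x}) \<le> card (R `` {y})" if "y \<in> A" for y
    using that assms(1) by (simp add: m_def)
  have "(y, x) \<in> R" if "(x, y) \<in> R" for y
  proof -
    have y: "y \<in> A" using that R by auto
    have sub: "R `` {y} \<subseteq> R `` {x}" using \<open>trans R\<close> that unfolding trans_def by blast
    have fin: "finite (R `` {x})" using R assms(1) by (auto intro: finite_subset[of _ A])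
    have "R `` {y} = R `` {x}" using card_subset_eq[OF fin sub] min[OF y] card_mono[OF fin sub] by simp
    then show ?thesis using refl[OF x] by auto
  qed
  then show ?thesis using that x by blast
qed

definition top_sets :: "'a set \<Rightarrow> ('a \<times> 'a) set \<Rightarrow> 'a set set" where
  "top_sets A R = {B. B \<noteq> {} \<and> B \<subseteq> A \<and> (\<forall>b\<in>B. \<forall>y. (b, y) \<in> R \<longrightarrow> y \<in> B \<and> (y, b) \<in> R)}"

definition max_classes :: "'a set \<Rightarrow> ('a \<times> 'a) set \<Rightarrow> 'a set set" where
  "max_classes A R = {C \<in> A // (R \<inter> R\<inverse>). \<forall>x\<in>C. \<forall>y. (x, y) \<in> R \<longrightarrow> (y, x) \<in> R}"

lemma top_setsD:
  assumes "B \<in> top_sets A R"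
  shows "B \<noteq> {}" and "B \<subseteq> A"
    and "\<And>b y. b \<in> B \<Longrightarrow> (b, y) \<in> R \<Longrightarrow> y \<in> B"
    and "\<And>b y. b \<in> B \<Longrightarrow> (b, y) \<in> R \<Longrightarrow> (y, b) \<in> R"
  using assms unfolding top_sets_def mem_Collect_eq by blast+

lemma max_classesD:
  assumes "C \<in> max_classes A R"
  shows "C \<in> A // (R \<inter> R\<inverse>)" and "\<And>x y. x \<in> C \<Longrightarrow> (x, y) \<in> R \<Longrightarrow> (y, x) \<in> R"
  using assms unfolding max_classes_def mem_Collect_eq by blast+

lemma top_sets_eq_Unions:
  assumes "quasi_order A R"
  shows "top_sets A R = Union ` (Pow (max_classes A R) - {{}})"
proof (intro equalityI subsetI)
  let ?E = "R \<inter> R\<inverse>"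
  have equiv: "equiv A ?E" using equiv_quasi_order[OF assms] .
  fix B assume "B \<in> top_sets A R"
  note B = top_setsD[OF this]
  have "\<Union> {C \<in> A // ?E. C \<subseteq> B} = B"
  proof (intro equalityI subsetI)
    fix b assume b: "b \<in> B"
    then have "?E `` {b} \<subseteq> B" using B(3) by blast
    moreover have "?E `` {b} \<in> A // ?E" using b B(2) by (auto intro: quotientI)
    moreover have "b \<in> ?E `` {b}" using equiv_class_self[OF equiv] b B(2) by blast
    ultimately show "b \<in> \<Union> {C \<in> A // ?E. C \<subseteq> B}" by blast
  qed blast
  moreover have "{C \<in> A // ?E. C \<subseteq> B} \<subseteq> max_classes A R"
    using B(4) unfolding max_classes_def by blast
  moreover have "{C \<in> A // ?E. C \<subseteq> B} \<noteq> {}" using B(1) calculation(1) by auto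
  ultimately show "B \<in> Union ` (Pow (max_classes A R) - {{}})" by blast
next
  let ?E = "R \<inter> R\<inverse>"
  have equiv: "equiv A ?E" using equiv_quasi_order[OF assms] .
  fix B assume "B \<in> Union ` (Pow (max_classes A R) - {{}})"
  then obtain X where X: "X \<subseteq> max_classes A R" "X \<noteq> {}" "B = \<Union> X" by auto
  have "B \<noteq> {}"
    using X max_classesD(1) in_quotient_imp_non_empty[OF equiv] by blast
  moreover have "B \<subseteq> A"
    using X max_classesD(1) in_quotient_imp_subset[OF equiv] by blast
  moreover have "y \<in> B \<and> (y, b) \<in> R" if b: "b \<in> B" and b_y: "(b, y) \<in> R" for b y
  proof -
    obtain C where C: "C \<in> X" "b \<in> C" using b X(3) by blast
    have "(y, b) \<in> R" using max_classesD(2)[OF subsetD[OF X(1) C(1)] C(2) b_y] .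
    then have "y \<in> C"
      using C X max_classesD(1) in_quotient_imp_closed[OF equiv] b_y by blast
    then show ?thesis using C X \<open>(y, b) \<in> R\<close> by auto
  qed
  ultimately show "B \<in> top_sets A R" unfolding top_sets_def by blast
qed

lemma cl_Union_max_classes:
  assumes qo: "quasi_order A R" and X: "X \<subseteq> max_classes A R"
  shows "cl (\<Union> X) (R \<inter> \<Union> X \<times> \<Union> X) = card X"
proof -
  have equiv: "equiv A (R \<inter> R\<inverse>)" using equiv_quasi_order[OF qo] .
  have X': "X \<subseteq> A // (R \<inter> R\<inverse>)" using X max_classesD(1) by blast
  have "\<Union> X // ((R \<inter> \<Union> X \<times> \<Union> X) \<inter> (R \<inter> \<Union> X \<times> \<Union> X)\<inverse>) =
      {C \<in> A // (R \<inter> R\<inverse>). C \<subseteq> \<Union> X}"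
  proof (rule quotient_restrict_saturated[OF qo])
    show "\<Union> X \<subseteq> A" using X' in_quotient_imp_subset[OF equiv] by blast
    show "y \<in> \<Union> X" if "x \<in> \<Union> X" "(x, y) \<in> R" "(y, x) \<in> R" for x y
      using that X' in_quotient_imp_closed[OF equiv] by blast
  qed
  then show ?thesis
    unfolding cl_def quotient_subset_Union[OF equiv X'] by simp
qed

lemma sum_top_sets:
  assumes fin: "finite A" and "A \<noteq> {}" and qo: "quasi_order A R"
  shows "(\<Sum>B\<in>top_sets A R. (-1::int) ^ cl B (R \<inter> B \<times> B)) = -1"
proof -
  let ?Q = "max_classes A R"
  have equiv: "equiv A (R \<inter> R\<inverse>)" using equiv_quasi_order[OF qo] .
  have "finite (A // (R \<inter> R\<inverse>))" using fin by (auto simp: quotient_def)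
  then have finQ: "finite ?Q" using max_classesD(1) by (blast intro: finite_subset)
  obtain x where x: "x \<in> A" and max: "\<forall>y. (x, y) \<in> R \<longrightarrow> (y, x) \<in> R"
    using exists_maximal[OF fin \<open>A \<noteq> {}\<close> qo] by metis
  have tr: "trans R" using qo by (simp add: quasi_order_def)
  have "(R \<inter> R\<inverse>) `` {x} \<in> ?Q"
    unfolding max_classes_def
  proof (intro CollectI conjI ballI allI impI)
    show "(R \<inter> R\<inverse>) `` {x} \<in> A // (R \<inter> R\<inverse>)" using x by (rule quotientI)
    fix z y assume z: "z \<in> (R \<inter> R\<inverse>) `` {x}" and zy: "(z, y) \<in> R"
    then have "(x, z) \<in> R" by blast
    then have "(y, x) \<in> R" using max transD[OF tr _ zy] by blast
    then show "(y, z) \<in> R" using transD[OF tr _ \<open>(x, z) \<in> R\<close>] by blast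
  qed
  then have "?Q \<noteq> {}" by blast
  have inj: "inj_on Union (Pow ?Q - {{}})"
  proof (rule inj_onI)
    fix X Y assume "X \<in> Pow ?Q - {{}}" "Y \<in> Pow ?Q - {{}}" "\<Union> X = \<Union> Y"
    moreover have "X \<subseteq> A // (R \<inter> R\<inverse>)" "Y \<subseteq> A // (R \<inter> R\<inverse>)"
      using calculation(1,2) max_classesD(1) by blast+
    ultimately show "X = Y" using quotient_subset_Union[OF equiv] by metis
  qed
  have "(\<Sum>B\<in>top_sets A R. (-1::int) ^ cl B (R \<inter> B \<times> B)) = (\<Sum>X\<in>Pow ?Q - {{}}. (-1) ^ card X)"
    unfolding top_sets_eq_Unions[OF qo] using inj cl_Union_max_classes[OF qo] by (simp add: sum.reindex)
  also have "\<dots> = (\<Sum>X\<in>Pow ?Q. (-1) ^ card X) - 1"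
    using finQ by (simp add: sum_diff1)
  also have "(\<Sum>X\<in>Pow ?Q. (-1::int) ^ card X) = (\<Prod>x\<in>?Q. 1 - 1)"
    using prod_diff_conv_sum[OF finQ, of "\<lambda>_. 1::int" "\<lambda>_. 1"] by simp
  also have "\<dots> = 0" using finQ \<open>?Q \<noteq> {}\<close> by (simp add: card_gt_0_iff)
  finally show ?thesis by simp
qed

section \<open>Stacking maps along an upward closed subset\<close>

lemma interval_split:
  assumes "{1..n::nat} = X \<union> Y" and "\<And>x y. x \<in> X \<Longrightarrow> y \<in> Y \<Longrightarrow> x < y"
  shows "X = {1..card X}" and "Y = {Suc (card X)..n}"
proof -
  have X_down: "x' \<in> X" if "x \<in> X" "1 \<le> x'" "x' \<le> x" for x x'
    using assms that by (metis Un_iff atLeastAtMost_iff le_trans not_le)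
  have fin: "finite X" using assms(1) by (metis finite_Un finite_atLeastAtMost)
  have "X = {1..card X} \<and> Y = {Suc (card X)..n}"
  proof (cases "X = {}")
    case False
    define M where "M = Max X"
    have M: "M \<in> X" using Max_in[OF fin False] by (simp add: M_def)
    have X_eq: "X = {1..M}"
      using X_down[OF M] Max_ge[OF fin] assms(1) by (fastforce simp: M_def)
    have "Y = {Suc M..n}"
    proof (intro equalityI subsetI)
      fix y assume "y \<in> Y"
      then show "y \<in> {Suc M..n}" using assms(1) assms(2)[OF M] by (auto simp: Suc_le_eq)
    next
      fix y assume y: "y \<in> {Suc M..n}"
      then have "y \<in> X \<union> Y" unfolding assms(1)[symmetric] by auto
      moreover have "y \<notin> X" using X_eq y by auto
      ultimately show "y \<in> Y" by blast
    qed
    then show ?thesis using X_eq by simp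
  qed (use assms in auto)
  then show "X = {1..card X}" "Y = {Suc (card X)..n}" by auto
qed

definition stack :: "'a set \<Rightarrow> 'a set \<Rightarrow> ('a \<Rightarrow> nat) \<Rightarrow> ('a \<Rightarrow> nat) \<Rightarrow> 'a \<Rightarrow> nat" where
  "stack A1 A2 f1 f2 x = (if x \<in> A1 then f1 x else if x \<in> A2 then f2 x + max_f A1 f1 else 0)"

definition lower_part :: "'a set \<Rightarrow> ('a \<Rightarrow> nat) \<Rightarrow> 'a \<Rightarrow> nat" where
  "lower_part A1 f x = (if x \<in> A1 then f x else 0)"

definition upper_part :: "'a set \<Rightarrow> 'a set \<Rightarrow> ('a \<Rightarrow> nat) \<Rightarrow> 'a \<Rightarrow> nat" where
  "upper_part A1 A2 f x = (if x \<in> A2 then f x - max_f A1 f else 0)"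

definition top_block :: "'a set \<Rightarrow> ('a \<Rightarrow> nat) \<Rightarrow> 'a set" where
  "top_block A f = {x\<in>A. f x = max_f A f}"

locale upper_split =
  fixes A A1 A2 :: "'a set" and R :: "('a \<times> 'a) set"
  assumes finite_A: "finite A" and quasi_order: "quasi_order A R"
    and A_eq: "A = A1 \<union> A2" and disjoint: "A1 \<inter> A2 = {}"
    and upward_closed: "\<And>a b. a \<in> A1 \<Longrightarrow> b \<in> A2 \<Longrightarrow> (b, a) \<notin> R"
begin

abbreviation "R1 \<equiv> R \<inter> A1 \<times> A1"
abbreviation "R2 \<equiv> R \<inter> A2 \<times> A2"

lemma related_cases:
  assumes "(a, b) \<in> R"
  obtains "a \<in> A1" "b \<in> A1" | "a \<in> A1" "b \<in> A2" | "a \<in> A2" "b \<in> A2"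
  using assms quasi_order upward_closed A_eq by (auto simp: quasi_order_def)

lemma stack_image:
  assumes "f1 \<in> surj_maps A1" and "f2 \<in> surj_maps A2"
  shows "stack A1 A2 f1 f2 ` A = {1..max_f A1 f1 + max_f A2 f2}"
proof -
  have "stack A1 A2 f1 f2 ` A = f1 ` A1 \<union> (\<lambda>v. v + max_f A1 f1) ` f2 ` A2"
    unfolding A_eq using disjoint by (auto simp: stack_def image_iff)
  also have "\<dots> = {1..max_f A1 f1} \<union> {Suc (max_f A1 f1)..max_f A1 f1 + max_f A2 f2}"
    using surj_maps_image[OF assms(1)] surj_maps_image[OF assms(2)]
    by (simp add: image_add_atLeastAtMost' add.commute)
  also have "\<dots> = {1..max_f A1 f1 + max_f A2 f2}" by auto
  finally show ?thesis .
qed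

lemma stack_in_surj_maps:
  "f1 \<in> surj_maps A1 \<Longrightarrow> f2 \<in> surj_maps A2 \<Longrightarrow> stack A1 A2 f1 f2 \<in> surj_maps A"
  using stack_image A_eq by (intro surj_mapsI) (auto simp: stack_def)

lemma max_f_stack:
  "f1 \<in> surj_maps A1 \<Longrightarrow> f2 \<in> surj_maps A2 \<Longrightarrow>
    max_f A (stack A1 A2 f1 f2) = max_f A1 f1 + max_f A2 f2"
  using stack_image by (simp add: max_f_def)

lemma stack_less:
  assumes "f1 \<in> surj_maps A1" and "f2 \<in> surj_maps A2" and "x \<in> A1" and "y \<in> A2"
  shows "stack A1 A2 f1 f2 x < stack A1 A2 f1 f2 y"
  using surj_maps_bounds[OF assms(1,3)] surj_maps_bounds[OF assms(2,4)] assms(3,4) disjoint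
  by (auto simp: stack_def)

lemma stack_in_L:
  assumes f1: "f1 \<in> L A1 R1" and f2: "f2 \<in> L A2 R2"
  shows "stack A1 A2 f1 f2 \<in> L A R"
proof -
  let ?f = "stack A1 A2 f1 f2"
  have s: "f1 \<in> surj_maps A1" "f2 \<in> surj_maps A2"
    using f1 f2 L_subset_surj_maps by blast+
  have "?f a \<le> ?f b \<and> (?f a = ?f b \<longrightarrow> (b, a) \<in> R)" if ab: "(a, b) \<in> R" for a b
    using ab
  proof (cases rule: related_cases)
    case 1 then show ?thesis using f1 ab by (auto simp: L_def stack_def)
  next
    case 2 then show ?thesis using stack_less[OF s 2] by simp
  next
    case 3 then show ?thesis using f2 ab disjoint by (auto simp: L_def stack_def)
  qed
  then show ?thesis using stack_in_surj_maps[OF s] by (simp add: L_def)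
qed

lemma separated_image:
  assumes f: "f \<in> surj_maps A" and sep: "\<And>x y. x \<in> A1 \<Longrightarrow> y \<in> A2 \<Longrightarrow> f x < f y"
  shows "f ` A1 = {1..max_f A1 f}" and "f ` A2 = {Suc (max_f A1 f)..max_f A f}"
proof -
  have "{1..max_f A f} = f ` A1 \<union> f ` A2" using surj_maps_image[OF f] A_eq by auto
  note split = interval_split[OF this]
  show "f ` A1 = {1..max_f A1 f}" "f ` A2 = {Suc (max_f A1 f)..max_f A f}"
    using split sep by (auto simp: max_f_def)
qed

lemma lower_part_in_surj_maps:
  assumes "f \<in> surj_maps A" and "\<And>x y. x \<in> A1 \<Longrightarrow> y \<in> A2 \<Longrightarrow> f x < f y"
  shows "lower_part A1 f \<in> surj_maps A1"
proof -
  have "lower_part A1 f ` A1 = {1..max_f A1 f}"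
    using separated_image(1)[OF assms] by (auto simp: lower_part_def)
  then show ?thesis by (intro surj_mapsI) (auto simp: lower_part_def)
qed

lemma upper_part_in_surj_maps:
  assumes f: "f \<in> surj_maps A" and sep: "\<And>x y. x \<in> A1 \<Longrightarrow> y \<in> A2 \<Longrightarrow> f x < f y"
  shows "upper_part A1 A2 f \<in> surj_maps A2"
proof -
  let ?m = "max_f A1 f"
  have "upper_part A1 A2 f ` A2 = (\<lambda>v. v - ?m) ` f ` A2"
    by (auto simp: upper_part_def image_iff)
  also have "\<dots> = (\<lambda>v. v - ?m) ` {Suc ?m..max_f A f}"
    by (simp only: separated_image(2)[OF f sep])
  also have "\<dots> = {1..max_f A f - ?m}"
  proof (intro equalityI subsetI)
    fix y assume "y \<in> {1..max_f A f - ?m}"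
    then show "y \<in> (\<lambda>v. v - ?m) ` {Suc ?m..max_f A f}"
      by (intro image_eqI[where x = "y + ?m"]) auto
  qed auto
  finally show ?thesis by (intro surj_mapsI) (auto simp: upper_part_def)
qed

lemma lower_upper_parts:
  assumes f: "f \<in> L A R" and sep: "\<And>x y. x \<in> A1 \<Longrightarrow> y \<in> A2 \<Longrightarrow> f x < f y"
  shows "lower_part A1 f \<in> L A1 R1" and "upper_part A1 A2 f \<in> L A2 R2"
    and "stack A1 A2 (lower_part A1 f) (upper_part A1 A2 f) = f"
proof -
  have sf: "f \<in> surj_maps A" using f L_subset_surj_maps by blast
  let ?m = "max_f A1 f"
  have f_ge: "?m < f x" if "x \<in> A2" for x
  proof -
    have "f x \<in> f ` A2" using that by simp
    then show ?thesis using separated_image(2)[OF sf sep] by simp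
  qed
  have fR: "f a \<le> f b" "f a = f b \<longrightarrow> (b, a) \<in> R" if "(a, b) \<in> R" for a b
    using f that by (auto simp: L_def)
  show "lower_part A1 f \<in> L A1 R1"
    using lower_part_in_surj_maps[OF sf sep] fR by (auto simp: L_def lower_part_def)
  show "upper_part A1 A2 f \<in> L A2 R2"
  proof -
    have "f a = f b" if "a \<in> A2" "b \<in> A2" "f a - ?m = f b - ?m" for a b
      using f_ge[OF that(1)] f_ge[OF that(2)] that(3) by linarith
    then show ?thesis
      using upper_part_in_surj_maps[OF sf sep] fR by (auto simp: L_def upper_part_def diff_le_mono)
  qed
  show "stack A1 A2 (lower_part A1 f) (upper_part A1 A2 f) = f"
  proof
    fix x
    have "max_f A1 (lower_part A1 f) = ?m" by (rule max_f_cong) (simp add: lower_part_def)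
    then show "stack A1 A2 (lower_part A1 f) (upper_part A1 A2 f) x = f x"
      using f_ge[of x] surj_maps_outside[OF sf, of x] A_eq
      by (auto simp: stack_def lower_part_def upper_part_def)
  qed
qed

lemma cl_Un: "cl A R = cl A1 R1 + cl A2 R2"
proof -
  let ?E = "R \<inter> R\<inverse>"
  have R: "R \<subseteq> A \<times> A" using quasi_order by (simp add: quasi_order_def)
  have quotient_A1: "A1 // (R1 \<inter> R1\<inverse>) = {C \<in> A // ?E. C \<subseteq> A1}"
    using R A_eq upward_closed by (intro quotient_restrict_saturated[OF quasi_order]) auto
  have quotient_A2: "A2 // (R2 \<inter> R2\<inverse>) = {C \<in> A // ?E. C \<subseteq> A2}"
    using R A_eq upward_closed by (intro quotient_restrict_saturated[OF quasi_order]) auto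
  let ?X1 = "{C \<in> A // ?E. C \<subseteq> A1}" and ?X2 = "{C \<in> A // ?E. C \<subseteq> A2}"
  have "A // ?E = ?X1 \<union> ?X2"
    using R A_eq upward_closed by (auto simp: quotient_def)
  then have "card (A // ?E) = card (?X1 \<union> ?X2)" by (rule arg_cong)
  also have "\<dots> = card ?X1 + card ?X2"
  proof (rule card_Un_disjoint)
    have "finite (A // ?E)" using finite_A by (auto simp: quotient_def)
    then show "finite ?X1" "finite ?X2" by simp_all
    show "?X1 \<inter> ?X2 = {}"
      using in_quotient_imp_non_empty[OF equiv_quasi_order[OF quasi_order]] disjoint by blast
  qed
  finally show ?thesis unfolding cl_def quotient_A1 quotient_A2 .
qed

lemma parts_stack:
  assumes "f1 \<in> surj_maps A1" and "f2 \<in> surj_maps A2"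
  shows "lower_part A1 (stack A1 A2 f1 f2) = f1" and "upper_part A1 A2 (stack A1 A2 f1 f2) = f2"
proof -
  show "lower_part A1 (stack A1 A2 f1 f2) = f1"
    by (rule ext) (auto simp: lower_part_def stack_def surj_maps_outside[OF assms(1)])
  have "max_f A1 (stack A1 A2 f1 f2) = max_f A1 f1"
    by (rule max_f_cong) (simp add: stack_def)
  then show "upper_part A1 A2 (stack A1 A2 f1 f2) = f2"
    using disjoint by (intro ext) (auto simp: upper_part_def stack_def surj_maps_outside[OF assms(2)])
qed

lemma sum_sign_separated_L:
  "(\<Sum>f \<in> {f \<in> L A R. (\<forall>x\<in>A1. \<forall>y\<in>A2. f x < f y) \<and> P (lower_part A1 f) \<and> Q (upper_part A1 A2 f)}.
      (-1::int) ^ (cl A R + max_f A f)) =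
    (\<Sum>f \<in> {f \<in> L A1 R1. P f}. (-1) ^ (cl A1 R1 + max_f A1 f)) *
    (\<Sum>f \<in> {f \<in> L A2 R2. Q f}. (-1) ^ (cl A2 R2 + max_f A2 f))"
proof -
  let ?S = "{f \<in> L A R. (\<forall>x\<in>A1. \<forall>y\<in>A2. f x < f y) \<and> P (lower_part A1 f) \<and> Q (upper_part A1 A2 f)}"
  let ?T = "{f \<in> L A1 R1. P f} \<times> {f \<in> L A2 R2. Q f}"
  let ?i = "\<lambda>p. stack A1 A2 (fst p) (snd p)"
  let ?j = "\<lambda>f. (lower_part A1 f, upper_part A1 A2 f)"
  have surj: "fst p \<in> surj_maps A1" "snd p \<in> surj_maps A2" if "p \<in> ?T" for p
  proof -
    have "fst p \<in> L A1 R1" "snd p \<in> L A2 R2" using that by (auto simp: mem_Times_iff)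
    then show "fst p \<in> surj_maps A1" "snd p \<in> surj_maps A2"
      by (auto intro: subsetD[OF L_subset_surj_maps])
  qed
  have "(\<Sum>f \<in> ?S. (-1::int) ^ (cl A R + max_f A f)) =
      (\<Sum>p \<in> ?T. (-1) ^ (cl A1 R1 + max_f A1 (fst p)) * (-1) ^ (cl A2 R2 + max_f A2 (snd p)))"
  proof (rule sum.reindex_bij_witness[where i = ?i and j = ?j])
    fix f assume "f \<in> ?S"
    then have f: "f \<in> L A R" "\<And>x y. x \<in> A1 \<Longrightarrow> y \<in> A2 \<Longrightarrow> f x < f y"
      and PQ: "P (lower_part A1 f)" "Q (upper_part A1 A2 f)" by auto
    note parts = lower_upper_parts[OF f]
    show "?i (?j f) = f" using parts(3) by simp
    show "?j f \<in> ?T" using parts(1,2) PQ by simp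
    have "max_f A f = max_f A1 (lower_part A1 f) + max_f A2 (upper_part A1 A2 f)"
      using max_f_stack[OF subsetD[OF L_subset_surj_maps parts(1)] subsetD[OF L_subset_surj_maps parts(2)]]
      by (simp only: parts(3))
    then show "(-1) ^ (cl A1 R1 + max_f A1 (fst (?j f))) * (-1) ^ (cl A2 R2 + max_f A2 (snd (?j f))) =
        (-1::int) ^ (cl A R + max_f A f)"
      by (simp add: cl_Un power_add)
  next
    fix p assume p: "p \<in> ?T"
    show "?j (?i p) = p" using parts_stack[OF surj[OF p]] by simp
    have "?i p \<in> L A R" using p stack_in_L by (auto simp: mem_Times_iff)
    then show "?i p \<in> ?S"
      using p stack_less[OF surj[OF p]] parts_stack[OF surj[OF p]] by (auto simp: mem_Times_iff)
  qed
  also have "\<dots> = (\<Sum>f \<in> {f \<in> L A1 R1. P f}. (-1) ^ (cl A1 R1 + max_f A1 f)) *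
      (\<Sum>f \<in> {f \<in> L A2 R2. Q f}. (-1) ^ (cl A2 R2 + max_f A2 f))"
    by (simp add: sum_product sum.cartesian_product split_def)
  finally show ?thesis .
qed

lemma top_block_eq_iff:
  assumes f: "f \<in> L A R" and "A2 \<noteq> {}"
  shows "top_block A f = A2 \<longleftrightarrow>
    (\<forall>x\<in>A1. \<forall>y\<in>A2. f x < f y) \<and> upper_part A1 A2 f = indicator A2"
proof
  assume top: "top_block A f = A2"
  have sf: "f \<in> surj_maps A" using f L_subset_surj_maps by blast
  have on_top: "f y = max_f A f" if "y \<in> A2" for y
    using top that by (auto simp: top_block_def)
  have sep: "f x < f y" if "x \<in> A1" "y \<in> A2" for x y
    using that top surj_maps_bounds(2)[OF sf, of x] on_top[OF that(2)] A_eq disjoint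
    by (fastforce simp: top_block_def)
  have "f ` A2 = {max_f A f}" using on_top \<open>A2 \<noteq> {}\<close> by auto
  then have "max_f A f = Suc (max_f A1 f)"
    using separated_image(2)[OF sf] sep by auto
  then have "upper_part A1 A2 f = indicator A2"
    using on_top by (auto simp: upper_part_def fun_eq_iff)
  then show "(\<forall>x\<in>A1. \<forall>y\<in>A2. f x < f y) \<and> upper_part A1 A2 f = indicator A2"
    using sep by blast
next
  assume "(\<forall>x\<in>A1. \<forall>y\<in>A2. f x < f y) \<and> upper_part A1 A2 f = indicator A2"
  then have sep: "\<And>x y. x \<in> A1 \<Longrightarrow> y \<in> A2 \<Longrightarrow> f x < f y"
    and upper: "upper_part A1 A2 f = indicator A2" by auto
  have sf: "f \<in> surj_maps A" using f L_subset_surj_maps by blast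
  have "max_f A f = max_f A1 (lower_part A1 f) + max_f A2 (indicator A2 :: 'a \<Rightarrow> nat)"
    using max_f_stack[OF lower_part_in_surj_maps[OF sf sep] indicator_in_surj_maps]
    by (simp only: lower_upper_parts(3)[OF f sep, unfolded upper])
  also have "\<dots> = Suc (max_f A1 f)"
    using max_f_indicator[OF \<open>A2 \<noteq> {}\<close>] max_f_cong[of A1 "lower_part A1 f" f]
    by (simp add: lower_part_def)
  finally have max: "max_f A f = Suc (max_f A1 f)" .
  have "f x = Suc (max_f A1 f)" if "x \<in> A2" for x
    using fun_cong[OF upper, of x] that by (simp add: upper_part_def)
  moreover have "f x \<le> max_f A1 f" if "x \<in> A1" for x
    using separated_image(1)[OF sf sep] that by auto
  ultimately show "top_block A f = A2"
    unfolding top_block_def max using A_eq by force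
qed

lemma sum_sign_top_block:
  assumes "A2 \<noteq> {}" and "indicator A2 \<in> L A2 R2"
  shows "(\<Sum>f\<in>{f \<in> L A R. top_block A f = A2}. (-1::int) ^ (cl A R + max_f A f)) =
    - ((-1) ^ cl A2 R2 * (\<Sum>f\<in>L A1 R1. (-1) ^ (cl A1 R1 + max_f A1 f)))"
proof -
  have "{f \<in> L A R. top_block A f = A2} = {f \<in> L A R. (\<forall>x\<in>A1. \<forall>y\<in>A2. f x < f y) \<and>
      True \<and> upper_part A1 A2 f = indicator A2}"
    using top_block_eq_iff[OF _ assms(1)] by auto
  then have "(\<Sum>f\<in>{f \<in> L A R. top_block A f = A2}. (-1::int) ^ (cl A R + max_f A f)) =
      (\<Sum>f\<in>{f \<in> L A1 R1. True}. (-1) ^ (cl A1 R1 + max_f A1 f)) *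
      (\<Sum>f\<in>{f \<in> L A2 R2. f = indicator A2}. (-1) ^ (cl A2 R2 + max_f A2 f))"
    using sum_sign_separated_L[of "\<lambda>_. True" "\<lambda>f. f = indicator A2"] by simp
  also have "{f \<in> L A2 R2. f = indicator A2} = {indicator A2}"
    using assms(2) by auto
  finally show ?thesis using max_f_indicator[OF assms(1)] by simp
qed

lemma mono_coarsening_iff_separated:
  assumes g_sep: "\<And>x y. x \<in> A1 \<Longrightarrow> y \<in> A2 \<Longrightarrow> g x < g y"
    and g_const: "\<And>y y'. y \<in> A2 \<Longrightarrow> y' \<in> A2 \<Longrightarrow> g y = g y'"
  shows "mono_coarsening A f g \<longleftrightarrow>
    (\<forall>x\<in>A1. \<forall>y\<in>A2. f x < f y) \<and> mono_coarsening A1 (lower_part A1 f) (lower_part A1 g)"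
proof
  assume fg: "mono_coarsening A f g"
  have "f x < f y" if "x \<in> A1" "y \<in> A2" for x y
    using fg g_sep[OF that] that A_eq unfolding mono_coarsening_def by (meson UnCI leD leI)
  moreover have "mono_coarsening A1 (lower_part A1 f) (lower_part A1 g)"
    using fg A_eq unfolding mono_coarsening_def lower_part_def by simp
  ultimately show "(\<forall>x\<in>A1. \<forall>y\<in>A2. f x < f y) \<and> mono_coarsening A1 (lower_part A1 f) (lower_part A1 g)"
    by blast
next
  assume "(\<forall>x\<in>A1. \<forall>y\<in>A2. f x < f y) \<and> mono_coarsening A1 (lower_part A1 f) (lower_part A1 g)"
  then have f_sep: "\<And>x y. x \<in> A1 \<Longrightarrow> y \<in> A2 \<Longrightarrow> f x < f y"
    and lower: "mono_coarsening A1 (lower_part A1 f) (lower_part A1 g)" by auto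
  show "mono_coarsening A f g"
    unfolding mono_coarsening_def
  proof (intro ballI impI)
    fix x y assume "x \<in> A" "y \<in> A" "f x \<le> f y"
    then consider "x \<in> A1" "y \<in> A1" | "x \<in> A1" "y \<in> A2" | "x \<in> A2" "y \<in> A2"
      using A_eq f_sep by (metis Un_iff leD)
    then show "g x \<le> g y"
    proof cases
      case 1 then show ?thesis
        using lower \<open>f x \<le> f y\<close> by (simp add: mono_coarsening_def lower_part_def)
    next
      case 2 then show ?thesis using g_sep[OF 2] by simp
    next
      case 3 then show ?thesis using g_const[OF 3] by simp
    qed
  qed
qed

lemma L'_iff_lower_part:
  assumes g: "g \<in> surj_maps A" and g_sep: "\<And>x y. x \<in> A1 \<Longrightarrow> y \<in> A2 \<Longrightarrow> g x < g y"
    and g_const: "\<And>y y'. y \<in> A2 \<Longrightarrow> y' \<in> A2 \<Longrightarrow> g y = g y'"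
  shows "g \<in> L' A R \<longleftrightarrow> lower_part A1 g \<in> L' A1 R1"
proof
  assume "g \<in> L' A R"
  then show "lower_part A1 g \<in> L' A1 R1"
    using lower_part_in_surj_maps[OF g g_sep] by (auto simp: L'_def lower_part_def)
next
  assume lower: "lower_part A1 g \<in> L' A1 R1"
  have "g a \<le> g b" if ab: "(a, b) \<in> R" for a b
    using ab
  proof (cases rule: related_cases)
    case 1 then show ?thesis using lower ab by (auto simp: L'_def lower_part_def)
  next
    case 2 then show ?thesis using g_sep[OF 2] by simp
  next
    case 3 then show ?thesis using g_const[OF 3] by simp
  qed
  then show "g \<in> L' A R" using g by (simp add: L'_def)
qed

end

lemma upper_split_Diff:
  assumes "finite A" and "quasi_order A R" and "B \<subseteq> A"
    and "\<And>a b. a \<in> A - B \<Longrightarrow> b \<in> B \<Longrightarrow> (b, a) \<notin> R"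
  shows "upper_split A (A - B) B R"
  using assms by (intro upper_split.intro) auto

section \<open>Alternating sums over \<open>L\<close>\<close>

lemma top_block_surj_maps:
  assumes g: "g \<in> surj_maps A" and "A \<noteq> {}"
  shows "top_block A g \<noteq> {}" and "top_block A g \<subseteq> A"
    and "\<And>x y. x \<in> A - top_block A g \<Longrightarrow> y \<in> top_block A g \<Longrightarrow> g x < g y"
    and "\<And>y y'. y \<in> top_block A g \<Longrightarrow> y' \<in> top_block A g \<Longrightarrow> g y = g y'"
proof -
  have "max_f A g \<in> g ` A" using surj_maps_image[OF g] max_f_pos[OF g \<open>A \<noteq> {}\<close>] by simp
  then show "top_block A g \<noteq> {}" by (auto simp: top_block_def)
  show "top_block A g \<subseteq> A" by (auto simp: top_block_def)
  show "g x < g y" if "x \<in> A - top_block A g" "y \<in> top_block A g" for x y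
    using that surj_maps_bounds(2)[OF g, of x] by (auto simp: top_block_def)
  show "g y = g y'" if "y \<in> top_block A g" "y' \<in> top_block A g" for y y'
    using that by (simp add: top_block_def)
qed

lemma top_block_in_top_sets:
  assumes qo: "quasi_order A R" and f: "f \<in> L A R" and "A \<noteq> {}"
  shows "top_block A f \<in> top_sets A R"
proof -
  have sf: "f \<in> surj_maps A" using f L_subset_surj_maps by blast
  have "y \<in> top_block A f \<and> (y, b) \<in> R" if b: "b \<in> top_block A f" and b_y: "(b, y) \<in> R" for b y
  proof -
    have y: "y \<in> A" using b_y qo by (auto simp: quasi_order_def)
    have "f b \<le> f y" using f b_y by (auto simp: L_def)
    then have "f y = f b" using b surj_maps_bounds(2)[OF sf y] by (auto simp: top_block_def)
    then show ?thesis using f b b_y y by (auto simp: L_def top_block_def)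
  qed
  with top_block_surj_maps(1,2)[OF sf \<open>A \<noteq> {}\<close>] show ?thesis
    unfolding top_sets_def by blast
qed

lemma indicator_in_L_top_set:
  assumes "B \<in> top_sets A R"
  shows "indicator B \<in> L B (R \<inter> B \<times> B)"
  using assms indicator_in_surj_maps by (auto simp: L_def top_sets_def)

lemma sum_sign_L:
  assumes "finite A" and "quasi_order A R"
  shows "(\<Sum>f\<in>L A R. (-1::int) ^ (cl A R + max_f A f)) = 1"
  using assms
proof (induction "card A" arbitrary: A R rule: less_induct)
  case less
  note fin = less.prems(1) and qo = less.prems(2)
  show ?case
  proof (cases "A = {}")
    case True
    then show ?thesis using L_empty[of R] qo by simp
  next
    case False
    have fiber: "(\<Sum>f\<in>{f \<in> L A R. top_block A f = B}. (-1::int) ^ (cl A R + max_f A f)) =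
        - ((-1) ^ cl B (R \<inter> B \<times> B))" if B: "B \<in> top_sets A R" for B
    proof -
      note B' = top_setsD[OF B]
      interpret upper_split A "A - B" B R
        using upper_split_Diff[OF fin qo B'(2)] B'(3) by blast
      have "card (A - B) < card A"
        using fin B'(1,2) by (intro psubset_card_mono) auto
      then have "(\<Sum>f\<in>L (A - B) R1. (-1::int) ^ (cl (A - B) R1 + max_f (A - B) f)) = 1"
        using less.hyps[of "A - B" R1] fin quasi_order_restrict[OF qo Diff_subset] by simp
      then show ?thesis
        using sum_sign_top_block[OF B'(1) indicator_in_L_top_set[OF B]] by simp
    qed
    have "top_sets A R \<subseteq> Pow A" using top_setsD(2) by blast
    then have "finite (top_sets A R)" using fin by (simp add: finite_subset)
    then have "(\<Sum>f\<in>L A R. (-1::int) ^ (cl A R + max_f A f)) =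
        (\<Sum>B\<in>top_sets A R. \<Sum>f\<in>{f \<in> L A R. top_block A f = B}. (-1) ^ (cl A R + max_f A f))"
      using finite_L[OF fin] top_block_in_top_sets[OF qo _ False] by (intro sum.group[symmetric]) auto
    also have "\<dots> = - (\<Sum>B\<in>top_sets A R. (-1) ^ cl B (R \<inter> B \<times> B))"
      by (simp add: fiber sum_negf)
    also have "\<dots> = 1" using sum_top_sets[OF fin False qo] by simp
    finally show ?thesis .
  qed
qed

lemma sum_sign_L_mono_coarsening:
  assumes "finite A" and "quasi_order A R" and "g \<in> surj_maps A"
  shows "(\<Sum>f\<in>{f \<in> L A R. mono_coarsening A f g}. (-1::int) ^ (cl A R + max_f A f)) =
    (if g \<in> L' A R then 1 else 0)"
  using assms
proof (induction "card A" arbitrary: A R g rule: less_induct)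
  case less
  note fin = less.prems(1) and qo = less.prems(2) and g = less.prems(3)
  show ?case
  proof (cases "A = {}")
    case True
    then have "g = (\<lambda>_. 0)" using g by (simp add: surj_maps_empty)
    moreover have "L A R = {\<lambda>_. 0}" "L' A R = {\<lambda>_. 0}"
      using True L_empty[of R] L'_empty[of R] qo by simp_all
    ultimately show ?thesis using True by (simp add: mono_coarsening_def)
  next
    case False
    define B where "B = top_block A g"
    note B = top_block_surj_maps[OF g False, folded B_def]
    show ?thesis
    proof (cases "\<exists>a\<in>A - B. \<exists>b\<in>B. (b, a) \<in> R")
      case True
      then obtain a b where ab: "a \<in> A - B" "b \<in> B" "(b, a) \<in> R" by blast
      then have "g \<notin> L' A R" using B(3)[OF ab(1,2)] by (auto simp: L'_def not_le)
      then have "{f \<in> L A R. mono_coarsening A f g} = {}" using mono_coarsening_in_L'[OF qo _ _ g] by blast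
      then show ?thesis using \<open>g \<notin> L' A R\<close> by (simp only: sum.empty if_False)
    next
      case False
      interpret upper_split A "A - B" B R
        using upper_split_Diff[OF fin qo B(2)] False by blast
      let ?g' = "lower_part (A - B) g"
      have "card (A - B) < card A"
        using fin B(1,2) by (intro psubset_card_mono) auto
      then have IH: "(\<Sum>f\<in>{f \<in> L (A - B) R1. mono_coarsening (A - B) f ?g'}.
          (-1::int) ^ (cl (A - B) R1 + max_f (A - B) f)) = (if ?g' \<in> L' (A - B) R1 then 1 else 0)"
        using less.hyps[of "A - B" R1 ?g'] fin quasi_order_restrict[OF qo Diff_subset]
          lower_part_in_surj_maps[OF g B(3)] by simp
      have "(\<Sum>f\<in>L B R2. (-1::int) ^ (cl B R2 + max_f B f)) = 1"
        using sum_sign_L[of B R2] fin B(2) quasi_order_restrict[OF qo B(2)] by (simp add: finite_subset)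
      moreover have "{f \<in> L A R. mono_coarsening A f g} = {f \<in> L A R. (\<forall>x\<in>A - B. \<forall>y\<in>B. f x < f y) \<and>
          mono_coarsening (A - B) (lower_part (A - B) f) ?g' \<and> True}"
        using mono_coarsening_iff_separated[OF B(3,4)] by auto
      ultimately show ?thesis
        using sum_sign_separated_L[of "\<lambda>f. mono_coarsening (A - B) f ?g'" "\<lambda>_. True"]
          IH L'_iff_lower_part[OF g B(3,4)] by simp
    qed
  qed
qed

section \<open>The map \<open>\<phi>\<^sub>e\<^sub>h\<^sub>r\<close>\<close>

lemma phi_ehr_eq_sum_comps_L':
  assumes fin: "finite A" and qo: "quasi_order A R"
  shows "phi_ehr A R D = sum_comps A (L' A R) D"
proof -
  let ?G = "{g \<in> surj_maps A. comp_of A g = D}"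
  let ?w = "\<lambda>f. (-1::int) ^ (cl A R + max_f A f)"
  have finG: "finite ?G" using finite_surj_maps[OF fin] by simp
  have "phi_iota A R = (\<lambda>C. (-1) ^ cl A R * sum_comps A (L A R) C)"
    by (simp add: fun_eq_iff phi_iota_def phi_def)
  then have "phi_ehr A R D = (-1) ^ cl A R * (\<Sum>f\<in>L A R. theta_basis (comp_of A f) D)"
    by (simp add: phi_ehr_def theta_def lin_ext_scaled_sum_comps[OF fin L_subset_surj_maps])
  also have "\<dots> = (\<Sum>f\<in>L A R. \<Sum>g\<in>?G. if mono_coarsening A f g then ?w f else 0)"
    unfolding sum_distrib_left
  proof (rule sum.cong[OF refl])
    fix f assume f: "f \<in> L A R"
    have "{g \<in> surj_maps A. mono_coarsening A f g \<and> comp_of A g = D} = {g \<in> ?G. mono_coarsening A f g}"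
      by auto
    then have "theta_basis (comp_of A f) D = (-1) ^ max_f A f * int (card {g \<in> ?G. mono_coarsening A f g})"
      using theta_basis_comp_of[OF subsetD[OF L_subset_surj_maps f], of D] by simp
    then show "(-1) ^ cl A R * theta_basis (comp_of A f) D = (\<Sum>g\<in>?G. if mono_coarsening A f g then ?w f else 0)"
      using finG by (simp add: sum.If_cases power_add Int_def conj_commute)
  qed
  also have "\<dots> = (\<Sum>g\<in>?G. \<Sum>f\<in>{f \<in> L A R. mono_coarsening A f g}. ?w f)"
    using finite_L[OF fin] by (simp add: sum.swap[of _ "L A R"] sum.inter_filter)
  also have "\<dots> = (\<Sum>g\<in>?G. if g \<in> L' A R then 1 else 0)"
    using sum_sign_L_mono_coarsening[OF fin qo] by simp
  also have "\<dots> = int (card {g \<in> ?G. g \<in> L' A R})"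
    by (simp add: sum.inter_filter[OF finG, symmetric])
  also have "{g \<in> ?G. g \<in> L' A R} = {g \<in> L' A R. comp_of A g = D}"
    using L'_subset_surj_maps by blast
  finally show ?thesis by (simp add: sum_comps_def)
qed

lemma eps'_sum_comps_L':
  assumes fin: "finite A" and qo: "quasi_order A R"
  shows "eps' (sum_comps A (L' A R)) = 1"
proof -
  have "eps' (sum_comps A (L' A R)) = (\<Sum>f\<in>L' A R. eps'_basis (comp_of A f) ())"
    using lin_ext_scaled_sum_comps[OF fin L'_subset_surj_maps, of eps'_basis 1] by (simp add: eps'_def)
  also have "\<dots> = int (card {f \<in> L' A R. max_f A f \<le> 1})"
    using finite_subset[OF L'_subset_surj_maps finite_surj_maps[OF fin]]
    by (simp add: eps'_basis_def sum.If_cases Int_def conj_commute)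
  also have "{f \<in> L' A R. max_f A f \<le> 1} = {indicator A}"
  proof -
    have "indicator A \<in> L' A R"
      using indicator_in_surj_maps qo by (auto simp: L'_def quasi_order_def)
    then show ?thesis
      using surj_maps_max_f_le_1[of A] L'_subset_surj_maps by blast
  qed
  finally show ?thesis by simp
qed

theorem proposition58:
  fixes A :: "'a set" and R :: "('a \<times> 'a) set"
  assumes "finite A" and "quasi_order A R"
  shows "eps' (phi_ehr A R) = 1 \<and> phi_ehr A R = sum_comps A (L' A R)"
proof -
  have "phi_ehr A R = sum_comps A (L' A R)"
    using phi_ehr_eq_sum_comps_L'[OF assms] by (simp add: fun_eq_iff)
  then show ?thesis using eps'_sum_comps_L'[OF assms] by simp
qed

end
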